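(* For every $r \geqslant 4$ there exists $C(r) > 0$ such that the following holds. If $n \in \mathbb{N}$ and $p > 0$ satisfy $p\, n^{1/\lambda(r)} \log n \leqslant 1/(2\mathrm{e})$, and $n$ is sufficiently large, then $$\mathbb{E}\big(Y_m(uv)\big) \,\leqslant\, \left(\frac{m + C(r)}{2\binom{r}{2}\log n}\right)^{m - \lambda(r)}$$ for every edge $uv \in E(K_n)$ and every $m$ with $\lambda(r) + 1 \leqslant m \leqslant \binom{r}{2}\log n$.
   Context: $\lambda(r) = \frac{\binom{r}{2}-2}{r-2}$ and $\mathrm{e}$ is Euler's number. $G_{n,p}$ is the Erdős–Rényi random graph on $[n]$. For $m \in \mathbb{N}$ and $uv \in E(K_n)$, $Y_m(uv)$ is the number of subgraphs $F \subset G_{n,p}$ whose vertex set contains $u$ and $v$ and which satisfy $e(F) = m \geqslant \lambda(r)\big(v(F)-2\big) + 1$. *)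

theory Defs
  imports "HOL-Probability.Probability"
begin

definition lam :: "nat \<Rightarrow> real" where
  "lam r = (real (r choose 2) - 2) / (real r - 2)"

definition Kn_edges :: "nat \<Rightarrow> nat set set" where
  "Kn_edges n = {e. e \<subseteq> {1..n} \<and> card e = 2}"

definition Gnp :: "nat \<Rightarrow> real \<Rightarrow> nat set set pmf" where
  "Gnp n p = map_pmf (\<lambda>f. {e \<in> Kn_edges n. f e})
                     (Pi_pmf (Kn_edges n) False (\<lambda>_. bernoulli_pmf p))"

definition Ycount :: "nat \<Rightarrow> nat \<Rightarrow> nat \<Rightarrow> nat \<Rightarrow> nat \<Rightarrow> nat set set \<Rightarrow> nat" where
  "Ycount r n m u v G = card {(V, E). V \<subseteq> {1..n} \<and> u \<in> V \<and> v \<in> V \<and>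
       E \<subseteq> G \<and> (\<forall>e\<in>E. e \<subseteq> V) \<and> card E = m \<and>
       real m \<ge> lam r * (real (card V) - 2) + 1}"

end

theory Submission
  imports Defs "HOL-Real_Asymp.Real_Asymp"
begin

text \<open>By linearity, \<open>\<EE> Y\<^sub>m(uv)\<close> is \<open>p\<^sup>m\<close> times the number of pairs \<open>(V, E)\<close> in \<open>K\<^sub>n\<close> counted by
  \<open>Y\<^sub>m(uv)\<close>. Such a \<open>V\<close> has at most \<open>J + 2\<close> vertices, where \<open>J = \<lfloor>(m - 1)/\<lambda>\<rfloor>\<close>, so there are
  at most \<open>(J + 1) n\<^sup>J\<close> choices of \<open>V\<close> and at most \<open>(e\<cdot>binom(J+2,2)/m)\<^sup>m\<close> choices of \<open>E\<close>.
  With \<open>a = n\<^bsup>1/\<lambda>\<^esup>\<close> and \<open>p \<le> 1/(2e a log n)\<close> this gives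
  \<open>\<EE> Y\<^sub>m(uv) \<le> (J + 1)/a \<cdot> (binom(J+2,2)/(2m log n))\<^sup>m\<close>. Since \<open>\<lambda> \<ge> 2\<close> and
  \<open>binom(r,2) \<le> 2\<lambda>\<^sup>2\<close>, one has \<open>binom(r,2)\<cdot>binom(J+2,2) \<le> m(m + 3 binom(r,2))\<close>, and
  \<open>J + 1 \<le> m \<le> binom(r,2) log n \<le> a\<close> for large \<open>n\<close>; so \<open>C(r) = 3 binom(r,2)\<close> works, the base
  being at most \<open>1\<close>.\<close>

lemma real_choose_two: "real (r choose 2) = real r * (real r - 1) / 2"
proof (cases r)
  case (Suc k)
  have "even (r * (r - 1))" by auto
  then have "real (r choose 2) * 2 = real (r * (r - 1))"
    by (simp add: choose_two real_of_nat_div)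
  then show ?thesis using Suc by (simp add: of_nat_diff algebra_simps)
qed simp

lemma lam_ge_two: assumes "r \<ge> 4" shows "2 \<le> lam r"
proof -
  have r: "real r \<ge> 4" using assms by simp
  then have "0 \<le> (real r - 1) * (real r - 4)" by simp
  then have "2 * (real r - 2) \<le> real r * (real r - 1) / 2 - 2"
    by (simp add: algebra_simps)
  then show ?thesis unfolding lam_def real_choose_two using r
    by (simp add: pos_le_divide_eq)
qed

lemma choose_two_le_lam_square: assumes "r \<ge> 4" shows "real (r choose 2) \<le> 2 * lam r ^ 2"
proof -
  have r: "real r \<ge> 4" using assms by simp
  define b where "b = real r * (real r - 1) / 2"
  have lam: "lam r * (real r - 2) = b - 2"
    unfolding lam_def real_choose_two b_def using r by simp
  have "2 * (b - 2)^2 - b * (real r - 2)^2 = (3 * real r * (real r - 1) * (real r - 4) + 16) / 2"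
    unfolding b_def by (simp add: power2_eq_square field_simps)
  moreover have "0 \<le> 3 * real r * (real r - 1) * (real r - 4) + 16" using r by simp
  ultimately have "b * (real r - 2)^2 \<le> (2 * lam r^2) * (real r - 2)^2"
    unfolding lam[symmetric] by (simp add: power_mult_distrib)
  moreover have "(real r - 2)^2 > 0" using r by simp
  ultimately show ?thesis by (simp add: real_choose_two b_def)
qed

lemma fact_mult_choose_le_power: "fact m * (N choose m) \<le> (N::nat) ^ m"
proof (cases "m \<le> N")
  case True
  have "fact N = fact m * (N choose m) * fact (N - m)"
    using binomial_fact_lemma[OF True] by (simp add: ac_simps)
  then have "fact m * (N choose m) = fact N div fact (N - m)" by simp
  also have "\<dots> \<le> N ^ m" using True by (rule fact_div_fact_le_pow)
  finally show ?thesis .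
qed (simp add: binomial_eq_0)

lemma power_div_fact_le_exp:
  fixes x :: real
  assumes "0 \<le> x"
  shows "x ^ m / fact m \<le> exp x"
proof -
  have sums: "(\<lambda>i. x ^ i / fact i) sums exp x"
    using exp_converges[of x] by (simp add: divide_inverse scaleR_conv_of_real mult.commute)
  have "(\<Sum>i\<in>{m}. x ^ i / fact i) \<le> (\<Sum>i. x ^ i / fact i)"
    using sums assms by (intro sum_le_suminf) (auto simp: sums_summable)
  then show ?thesis using sums sums_unique by fastforce
qed

lemma binomial_le_exp_power:
  assumes "m \<ge> 1"
  shows "real (N choose m) \<le> (exp 1 * real N / real m) ^ m"
proof -
  have m: "real m > 0" using assms by simp
  have "fact m * real (N choose m) \<le> real N ^ m"
    using fact_mult_choose_le_power[of m N] by (metis of_nat_fact of_nat_le_iff of_nat_mult of_nat_power)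
  then have "real (N choose m) \<le> real N ^ m / fact m" by (simp add: field_simps)
  also have "\<dots> = real N ^ m * (real m ^ m / fact m) / real m ^ m" using m by simp
  also have "\<dots> \<le> real N ^ m * exp (real m) / real m ^ m"
    using power_div_fact_le_exp[of "real m" m] m by (intro divide_right_mono mult_left_mono) auto
  also have "exp (real m) = exp 1 ^ m" using exp_of_nat_mult[of m 1] by simp
  also have "real N ^ m * exp 1 ^ m / real m ^ m = (exp 1 * real N / real m) ^ m"
    by (simp add: power_mult_distrib power_divide)
  finally show ?thesis .
qed

lemma card_subsets_card_le:
  assumes "n \<ge> 1"
  shows "card {W. W \<subseteq> {1..n::nat} \<and> card W \<le> J} \<le> (J + 1) * n ^ J"
proof -
  have "{W. W \<subseteq> {1..n} \<and> card W \<le> J} = (\<Union>j\<in>{..J}. {W. W \<subseteq> {1..n} \<and> card W = j})"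
    by auto
  then have "card {W. W \<subseteq> {1..n} \<and> card W \<le> J} \<le> (\<Sum>j\<in>{..J}. card {W. W \<subseteq> {1..n} \<and> card W = j})"
    by (simp add: card_UN_le)
  also have "\<dots> = (\<Sum>j\<in>{..J}. n choose j)" by (simp add: n_subsets)
  also have "\<dots> \<le> (\<Sum>j\<in>{..J}. n ^ J)"
  proof (intro sum_mono)
    fix j assume "j \<in> {..J}"
    then have "n ^ j \<le> n ^ J" using assms by (simp add: power_increasing)
    moreover have "n choose j \<le> n ^ j"
      by (cases "j \<le> n") (auto simp: binomial_le_pow binomial_eq_0)
    ultimately show "n choose j \<le> n ^ J" by linarith
  qed
  finally show ?thesis by simp
qed

lemma card_supersets_pair_card_le:
  assumes "u \<in> {1..n}" "v \<in> {1..n}" "u \<noteq> v"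
  shows "card {V. V \<subseteq> {1..n::nat} \<and> u \<in> V \<and> v \<in> V \<and> card V \<le> J + 2} \<le> (J + 1) * n ^ J"
proof -
  let ?Vs = "{V. V \<subseteq> {1..n::nat} \<and> u \<in> V \<and> v \<in> V \<and> card V \<le> J + 2}"
  let ?Ws = "{W. W \<subseteq> {1..n::nat} \<and> card W \<le> J}"
  have "?Vs \<subseteq> (\<lambda>W. W \<union> {u, v}) ` ?Ws"
  proof
    fix V assume V: "V \<in> ?Vs"
    then have "finite V" using finite_subset by auto
    then have "card (V - {u, v}) = card V - 2"
      using V assms(3) by (subst card_Diff_subset) auto
    then have "V - {u, v} \<in> ?Ws" using V by auto
    moreover have "V = (V - {u, v}) \<union> {u, v}" using V by auto
    ultimately show "V \<in> (\<lambda>W. W \<union> {u, v}) ` ?Ws" by blast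
  qed
  then have "card ?Vs \<le> card ((\<lambda>W. W \<union> {u, v}) ` ?Ws)" by (intro card_mono) auto
  also have "\<dots> \<le> card ?Ws" by (rule card_image_le) auto
  also have "\<dots> \<le> (J + 1) * n ^ J" using assms by (intro card_subsets_card_le) auto
  finally show ?thesis .
qed

definition Ysubgraphs :: "nat \<Rightarrow> nat \<Rightarrow> nat \<Rightarrow> nat \<Rightarrow> nat \<Rightarrow> nat set set \<Rightarrow> (nat set \<times> nat set set) set"
  where "Ysubgraphs r n m u v G = {(V, E). V \<subseteq> {1..n} \<and> u \<in> V \<and> v \<in> V \<and>
       E \<subseteq> G \<and> (\<forall>e\<in>E. e \<subseteq> V) \<and> card E = m \<and>
       real m \<ge> lam r * (real (card V) - 2) + 1}"

lemma Ycount_eq_card_Ysubgraphs: "Ycount r n m u v G = card (Ysubgraphs r n m u v G)"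
  unfolding Ycount_def Ysubgraphs_def ..

lemma finite_Ysubgraphs: "finite (Ysubgraphs r n m u v G)"
proof (rule finite_subset)
  show "Ysubgraphs r n m u v G \<subseteq> Pow {1..n} \<times> Pow (Pow {1..n})"
    unfolding Ysubgraphs_def by blast
qed simp

lemma Ysubgraphs_restrict:
  "Ysubgraphs r n m u v {e \<in> G. f e} = {x \<in> Ysubgraphs r n m u v G. \<forall>e\<in>snd x. f e}"
  unfolding Ysubgraphs_def by auto

lemma finite_Kn_edges: "finite (Kn_edges n)"
  unfolding Kn_edges_def by (rule finite_subset[of _ "Pow {1..n}"]) auto

lemma card_Ysubgraphs_Kn_edges_le:
  assumes uv: "{u, v} \<in> Kn_edges n"
    and J: "\<And>k::nat. lam r * (real k - 2) + 1 \<le> real m \<Longrightarrow> k \<le> J + 2"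
  shows "card (Ysubgraphs r n m u v (Kn_edges n)) \<le> (J + 1) * n ^ J * (((J + 2) choose 2) choose m)"
proof -
  have "{u, v} \<subseteq> {1..n}" "card {u, v} = 2" using uv unfolding Kn_edges_def by auto
  then have uv': "u \<in> {1..n}" "v \<in> {1..n}" "u \<noteq> v" by (auto simp del: atLeastAtMost_iff)
  define Vs where "Vs = {V. V \<subseteq> {1..n::nat} \<and> u \<in> V \<and> v \<in> V \<and> card V \<le> J + 2}"
  define Es where "Es V = {E. E \<subseteq> {e. e \<subseteq> V \<and> card e = 2} \<and> card E = m}" for V :: "nat set"
  have fin_Vs: "finite Vs" unfolding Vs_def by (rule finite_subset[of _ "Pow {1..n}"]) auto
  have fin_V: "finite V" if "V \<in> Vs" for V
    using that finite_subset[of V "{1..n}"] unfolding Vs_def by simp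
  have fin_Es: "finite (Es V)" if "V \<in> Vs" for V
  proof (rule finite_subset)
    show "Es V \<subseteq> Pow (Pow V)" unfolding Es_def by blast
    show "finite (Pow (Pow V))" using fin_V[OF that] by simp
  qed
  have card_Es: "card (Es V) \<le> ((J + 2) choose 2) choose m" if V: "V \<in> Vs" for V
  proof -
    have "{e. e \<subseteq> V \<and> card e = 2} \<subseteq> Pow V" by blast
    then have "finite {e. e \<subseteq> V \<and> card e = 2}"
      using fin_V[OF V] by (simp add: finite_subset)
    then have "card (Es V) = card {e. e \<subseteq> V \<and> card e = 2} choose m"
      unfolding Es_def by (rule n_subsets)
    also have "\<dots> = (card V choose 2) choose m" using fin_V[OF V] by (simp only: n_subsets)
    also have "\<dots> \<le> ((J + 2) choose 2) choose m"
      using V unfolding Vs_def by (intro binomial_right_mono) simp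
    finally show ?thesis .
  qed
  have "V \<in> Vs \<and> E \<in> Es V" if "(V, E) \<in> Ysubgraphs r n m u v (Kn_edges n)" for V E
  proof -
    have "V \<subseteq> {1..n}" "u \<in> V" "v \<in> V" "lam r * (real (card V) - 2) + 1 \<le> real m"
      "E \<subseteq> Kn_edges n" "\<forall>e\<in>E. e \<subseteq> V" "card E = m"
      using that unfolding Ysubgraphs_def by auto
    then show ?thesis using J unfolding Vs_def Es_def Kn_edges_def by auto
  qed
  then have "Ysubgraphs r n m u v (Kn_edges n) \<subseteq> Sigma Vs Es" by auto
  then have "card (Ysubgraphs r n m u v (Kn_edges n)) \<le> card (Sigma Vs Es)"
    using fin_Vs fin_Es by (intro card_mono) auto
  also have "\<dots> = (\<Sum>V\<in>Vs. card (Es V))" using fin_Vs fin_Es by (simp add: card_SigmaI)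
  also have "\<dots> \<le> card Vs * (((J + 2) choose 2) choose m)"
    using sum_mono[OF card_Es] by simp
  also have "\<dots> \<le> (J + 1) * n ^ J * (((J + 2) choose 2) choose m)"
    using card_supersets_pair_card_le[OF uv', of J] unfolding Vs_def by (rule mult_right_mono) simp
  finally show ?thesis .
qed

lemma prob_Pi_bernoulli_all_True:
  assumes "finite K" "E \<subseteq> K" "0 \<le> p" "p \<le> 1"
  shows "measure_pmf.prob (Pi_pmf K False (\<lambda>_. bernoulli_pmf p)) {f. \<forall>e\<in>E. f e} = p ^ card E"
proof -
  have "{f. \<forall>e\<in>E. f e} = Pi K (\<lambda>e. if e \<in> E then {True} else UNIV)"
    using assms(2) by (auto simp: Pi_def split: if_splits)
  then have "measure_pmf.prob (Pi_pmf K False (\<lambda>_. bernoulli_pmf p)) {f. \<forall>e\<in>E. f e}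
      = (\<Prod>e\<in>K. measure_pmf.prob (bernoulli_pmf p) (if e \<in> E then {True} else UNIV))"
    using assms(1) by (simp add: measure_Pi_pmf_Pi)
  also have "\<dots> = (\<Prod>e\<in>K. if e \<in> E then p else 1)"
    using assms(3,4) by (intro prod.cong) (auto simp: measure_pmf_single)
  also have "\<dots> = p ^ card E"
    using assms(1,2) by (simp add: prod.If_cases Int_absorb1)
  finally show ?thesis .
qed

lemma expectation_Ycount:
  assumes "0 \<le> p" "p \<le> 1"
  shows "measure_pmf.expectation (Gnp n p) (\<lambda>G. real (Ycount r n m u v G))
     = real (card (Ysubgraphs r n m u v (Kn_edges n))) * p ^ m"
proof -
  let ?P = "Pi_pmf (Kn_edges n) False (\<lambda>_. bernoulli_pmf p)"
  let ?T = "Ysubgraphs r n m u v (Kn_edges n)"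
  let ?present = "\<lambda>x. {f. \<forall>e\<in>snd x. f e}"
  have Y_sum: "real (Ycount r n m u v {e \<in> Kn_edges n. f e}) = (\<Sum>x\<in>?T. indicator (?present x) f)"
    for f :: "nat set \<Rightarrow> bool"
    using finite_Ysubgraphs[of r n m u v "Kn_edges n"]
    by (simp add: Ycount_eq_card_Ysubgraphs Ysubgraphs_restrict indicator_def sum.If_cases Int_def)
  have "measure_pmf.expectation (Gnp n p) (\<lambda>G. real (Ycount r n m u v G))
     = measure_pmf.expectation ?P (\<lambda>f. \<Sum>x\<in>?T. indicator (?present x) f)"
    unfolding Gnp_def integral_map_pmf Y_sum ..
  also have "\<dots> = (\<Sum>x\<in>?T. measure_pmf.prob ?P (?present x))"
    by (subst Bochner_Integration.integral_sum)
      (auto intro!: integrable_real_indicator simp: measure_pmf.emeasure_finite less_top[symmetric])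
  also have "\<dots> = (\<Sum>x\<in>?T. p ^ m)"
  proof (intro sum.cong refl)
    fix x assume "x \<in> ?T"
    then have "snd x \<subseteq> Kn_edges n" "card (snd x) = m" unfolding Ysubgraphs_def by auto
    then show "measure_pmf.prob ?P (?present x) = p ^ m"
      using prob_Pi_bernoulli_all_True[OF finite_Kn_edges _ assms] by simp
  qed
  finally show ?thesis by simp
qed


lemma expectation_Ycount_le:
  assumes uv: "{u, v} \<in> Kn_edges n" and p: "0 \<le> p" "p \<le> 1" and m: "m \<ge> 1"
    and J: "\<And>k::nat. lam r * (real k - 2) + 1 \<le> real m \<Longrightarrow> k \<le> J + 2"
  shows "measure_pmf.expectation (Gnp n p) (\<lambda>G. real (Ycount r n m u v G))
     \<le> real (J + 1) * real n ^ J * (exp 1 * real ((J + 2) choose 2) * p / real m) ^ m"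
proof -
  let ?N = "(J + 2) choose 2"
  have "card (Ysubgraphs r n m u v (Kn_edges n)) \<le> (J + 1) * n ^ J * (?N choose m)"
    using uv J by (rule card_Ysubgraphs_Kn_edges_le)
  then have "measure_pmf.expectation (Gnp n p) (\<lambda>G. real (Ycount r n m u v G))
      \<le> real ((J + 1) * n ^ J * (?N choose m)) * p ^ m"
    unfolding expectation_Ycount[OF p] using p
    by (intro mult_right_mono) (simp_all only: of_nat_le_iff zero_le_power)
  also have "\<dots> = real (J + 1) * real n ^ J * (real (?N choose m) * p ^ m)"
    by (simp only: of_nat_mult of_nat_power mult.assoc)
  also have "\<dots> \<le> real (J + 1) * real n ^ J * ((exp 1 * real ?N / real m) ^ m * p ^ m)"
    using binomial_le_exp_power[OF m, of ?N] p by (intro mult_left_mono mult_right_mono) auto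
  also have "(exp 1 * real ?N / real m) ^ m * p ^ m = (exp 1 * real ?N * p / real m) ^ m"
    by (simp add: power_mult_distrib[symmetric])
  finally show ?thesis .
qed

lemma mult_choose_two_le:
  fixes l b m :: real
  assumes l: "1 \<le> l" and b: "0 \<le> b" "b \<le> 2 * l^2" and m: "1 \<le> m" and J: "l * real J \<le> m - 1"
  shows "b * real ((J + 2) choose 2) \<le> m * (m + 3 * b)"
proof -
  have "(l * (real J + 2)) * (l * (real J + 1)) \<le> (m + 2 * l) * (m + l)"
    using J l m by (intro mult_mono) (auto simp: algebra_simps)
  then have A: "l^2 * (2 * real ((J + 2) choose 2)) \<le> (m + 2 * l) * (m + l)"
    by (simp add: real_choose_two power2_eq_square algebra_simps)
  have "b * ((m + 2 * l) * (m + l)) = b * m^2 + 3 * l * b * m + 2 * l^2 * b"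
    by (simp add: power2_eq_square algebra_simps)
  also have "\<dots> \<le> 2 * l^2 * m^2 + 3 * l^2 * b * m + 3 * l^2 * b * m"
  proof -
    have "b * m^2 \<le> 2 * l^2 * m^2" using b by (intro mult_right_mono) auto
    moreover have "l * (b * m) \<le> l^2 * (b * m)"
      using l b m by (intro mult_right_mono) (auto simp: power2_eq_square)
    moreover have "2 * (l^2 * b) \<le> 3 * m * (l^2 * b)" using b m by (intro mult_right_mono) auto
    ultimately show ?thesis by (simp add: algebra_simps)
  qed
  also have "\<dots> = l^2 * (2 * (m * (m + 3 * b)))" by (simp add: power2_eq_square algebra_simps)
  finally have "l^2 * (2 * (b * real ((J + 2) choose 2))) \<le> l^2 * (2 * (m * (m + 3 * b)))"
    using mult_left_mono[OF A b(1)] by (simp add: algebra_simps)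
  moreover have "l^2 > 0" using l by simp
  ultimately show ?thesis by simp
qed

lemma le_nat_floor_add_two:
  fixes l :: real
  assumes "0 < l" "1 \<le> x" "l * (real k - 2) + 1 \<le> x"
  shows "k \<le> nat \<lfloor>(x - 1) / l\<rfloor> + 2"
proof -
  have "real k - 2 \<le> (x - 1) / l" using assms by (simp add: field_simps)
  then have "real (k - 2) \<le> (x - 1) / l" using assms by (cases "k \<ge> 2") (auto simp: of_nat_diff)
  then show ?thesis using le_nat_floor by fastforce
qed

lemma power_le_root_power:
  fixes l x :: real
  assumes "1 < x" "0 < l" "1 \<le> m" "l * real J \<le> real m - 1"
  shows "x ^ J \<le> (x powr (1 / l)) ^ (m - 1)"
proof -
  have "x ^ J = x powr real J" using assms by (simp add: powr_realpow)
  also have "\<dots> \<le> x powr ((real m - 1) / l)"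
    using assms by (intro powr_mono) (auto simp: field_simps)
  also have "\<dots> = (x powr (1 / l)) powr real (m - 1)"
    using assms by (simp add: powr_powr of_nat_diff)
  also have "\<dots> = (x powr (1 / l)) ^ (m - 1)" using assms by (intro powr_realpow) simp
  finally show ?thesis .
qed

lemma subgraph_count_bound_le_powr:
  fixes l b L p :: real
  assumes l: "1 \<le> l" and b: "0 < b" "b \<le> 2 * l^2" and L: "3 \<le> L"
    and n: "1 < real n" "b * L \<le> real n powr (1 / l)"
    and p: "0 \<le> p" "exp 1 * p \<le> 1 / (2 * real n powr (1 / l) * L)"
    and m: "1 \<le> m" "real m \<le> b * L" and J: "l * real J \<le> real m - 1"
  shows "real (J + 1) * real n ^ J * (exp 1 * real ((J + 2) choose 2) * p / real m) ^ m
    \<le> ((real m + 3 * b) / (2 * b * L)) powr (real m - l)"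
proof -
  define a where "a = real n powr (1 / l)"
  define N where "N = (J + 2) choose 2"
  define q where "q = real N / (2 * real m * L)"
  define base where "base = (real m + 3 * b) / (2 * b * L)"
  have a: "1 \<le> a" using n l unfolding a_def by (intro ge_one_powr_ge_zero) auto
  have "real (J + 1) * real n ^ J * (exp 1 * real N * p / real m) ^ m
      \<le> real (J + 1) * a ^ (m - 1) * (q / a) ^ m"
  proof (intro mult_mono power_mono)
    show "real n ^ J \<le> a ^ (m - 1)"
      unfolding a_def using n l m J by (intro power_le_root_power) auto
    show "exp 1 * real N * p / real m \<le> q / a"
      using mult_left_mono[OF p(2), of "real N / real m"] m a L by (simp add: a_def q_def field_simps)
  qed (use p(1) a L in auto)
  also have "\<dots> = (real J + 1) / a * q ^ m"
  proof -
    have "a ^ m = a * a ^ (m - 1)" using m(1) by (cases m) auto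
    then show ?thesis using a by (simp add: power_divide)
  qed
  also have "\<dots> \<le> 1 * base ^ m"
  proof (intro mult_mono power_mono)
    have "1 * real J \<le> l * real J" using l by (intro mult_right_mono) auto
    then have "real J + 1 \<le> a" using J m(2) n(2) unfolding a_def by linarith
    then show "(real J + 1) / a \<le> 1" using a by simp
    have "b * real N \<le> real m * (real m + 3 * b)"
      unfolding N_def using l b m J by (intro mult_choose_two_le) auto
    then have "b * real N / (2 * b * real m * L) \<le> real m * (real m + 3 * b) / (2 * b * real m * L)"
      using b m L by (intro divide_right_mono) auto
    then show "q \<le> base" using b m by (simp add: q_def base_def)
  qed (use L in \<open>auto simp: q_def\<close>)
  also have "\<dots> \<le> base powr (real m - l)"
  proof -
    have "b * 3 \<le> b * L" using L b(1) by (intro mult_left_mono) auto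
    then have "real m + 3 * b \<le> 2 * b * L" using m(2) by (simp add: mult.assoc)
    then have "0 < base" "base \<le> 1" using b L m by (simp_all add: base_def)
    then show ?thesis using l by (simp add: powr_realpow[symmetric] powr_mono')
  qed
  finally show ?thesis unfolding N_def base_def .
qed

lemma expectation_Ycount_powr_le:
  fixes p :: real
  assumes r: "r \<ge> 4"
    and n_large: "3 \<le> ln (real n)" "real (r choose 2) * ln (real n) \<le> real n powr (1 / lam r)"
    and p: "0 < p" "p * real n powr (1 / lam r) * ln (real n) \<le> 1 / (2 * exp 1)"
    and uv: "{u, v} \<in> Kn_edges n"
    and m: "lam r + 1 \<le> real m" "real m \<le> real (r choose 2) * ln (real n)"
  shows "measure_pmf.expectation (Gnp n p) (\<lambda>G. real (Ycount r n m u v G))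
    \<le> ((real m + 3 * real (r choose 2)) / (2 * real (r choose 2) * ln (real n))) powr (real m - lam r)"
proof -
  define l L a where "l = lam r" and "L = ln (real n)" and "a = real n powr (1 / lam r)"
  define J where "J = nat \<lfloor>(real m - 1) / l\<rfloor>"
  have l: "2 \<le> l" using lam_ge_two[OF r] by (simp add: l_def)
  have L: "3 \<le> L" using n_large(1) by (simp add: L_def)
  have n: "1 < real n"
  proof (rule ccontr)
    assume "\<not> 1 < real n"
    then have "ln (real n) \<le> 0" by (cases "n = 0") auto
    then show False using L by (simp add: L_def)
  qed
  have m1: "1 \<le> real m" using m(1) l by (simp add: l_def)
  have "real J \<le> (real m - 1) / l" using m1 l by (simp add: J_def)
  then have lJ: "l * real J \<le> real m - 1" using l by (simp add: field_simps)
  have "1 \<le> a" using n l unfolding a_def l_def by (intro ge_one_powr_ge_zero) auto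
  then have "1 \<le> 2 * a * L" using L mult_mono[of 1 a 1 L] by simp
  then have "1 \<le> exp 1 * (2 * a * L)" using mult_mono[of 1 "exp 1" 1 "2 * a * L"] by simp
  then have "p * 1 \<le> p * (exp 1 * (2 * a * L))" using p(1) by (intro mult_left_mono) auto
  moreover have budget: "p * (exp 1 * (2 * a * L)) \<le> 1"
    using p(2) by (simp add: a_def L_def pos_le_divide_eq mult_ac)
  ultimately have "p \<le> 1" by linarith
  have p_le: "exp 1 * p \<le> 1 / (2 * a * L)"
    using budget \<open>1 \<le> 2 * a * L\<close> by (simp add: pos_le_divide_eq mult_ac)
  have "measure_pmf.expectation (Gnp n p) (\<lambda>G. real (Ycount r n m u v G))
      \<le> real (J + 1) * real n ^ J * (exp 1 * real ((J + 2) choose 2) * p / real m) ^ m"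
    using uv p(1) \<open>p \<le> 1\<close> m1 l unfolding J_def l_def
    by (intro expectation_Ycount_le le_nat_floor_add_two) auto
  also have "\<dots> \<le> ((real m + 3 * real (r choose 2)) / (2 * real (r choose 2) * L)) powr (real m - l)"
    using l choose_two_le_lam_square[OF r] r L n n_large(2) p(1) p_le m(2) m1 lJ
    unfolding l_def L_def a_def by (intro subgraph_count_bound_le_powr) auto
  finally show ?thesis unfolding L_def l_def .
qed

theorem lemma3p8:
  "\<forall>r::nat. r \<ge> 4 \<longrightarrow> (\<exists>C>0. \<exists>n0::nat. \<forall>n\<ge>n0. \<forall>p::real.
     p > 0 \<and> p * real n powr (1 / lam r) * ln (real n) \<le> 1 / (2 * exp 1) \<longrightarrow>
     (\<forall>u v m. {u, v} \<in> Kn_edges n \<and>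
        lam r + 1 \<le> real m \<and> real m \<le> real (r choose 2) * ln (real n) \<longrightarrow>
        measure_pmf.expectation (Gnp n p) (\<lambda>G. real (Ycount r n m u v G))
          \<le> ((real m + C) / (2 * real (r choose 2) * ln (real n))) powr (real m - lam r)))"
proof (intro allI impI)
  fix r :: nat assume r: "r \<ge> 4"
  have "0 < lam r" using lam_ge_two[OF r] by simp
  then have "eventually (\<lambda>n. 3 \<le> ln (real n) \<and>
      real (r choose 2) * ln (real n) \<le> real n powr (1 / lam r)) sequentially"
    by (intro eventually_conj) real_asymp+
  then obtain n0 where n0: "\<And>n. n \<ge> n0 \<Longrightarrow> 3 \<le> ln (real n) \<and>
      real (r choose 2) * ln (real n) \<le> real n powr (1 / lam r)"
    unfolding eventually_sequentially by blast
  have "0 < 3 * real (r choose 2)" using r by simp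
  then show "\<exists>C>0. \<exists>n0::nat. \<forall>n\<ge>n0. \<forall>p::real.
     p > 0 \<and> p * real n powr (1 / lam r) * ln (real n) \<le> 1 / (2 * exp 1) \<longrightarrow>
     (\<forall>u v m. {u, v} \<in> Kn_edges n \<and>
        lam r + 1 \<le> real m \<and> real m \<le> real (r choose 2) * ln (real n) \<longrightarrow>
        measure_pmf.expectation (Gnp n p) (\<lambda>G. real (Ycount r n m u v G))
          \<le> ((real m + C) / (2 * real (r choose 2) * ln (real n))) powr (real m - lam r))"
    using n0 expectation_Ycount_powr_le[OF r] by blast
qed

end
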